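(* Let $\mu$ be a Borel measure on $\mathbb R$ with $\mu(\mathbb R)=1$, and let $f$ be Lipschitz continuous with $f(0)=f(\alpha)=f(1)=0$, $f<0$ on $(0,\alpha)$, $f>0$ on $(\alpha,1)$ for some $\alpha\in(0,1)$. Let $\hat f$ be a Lipschitz continuous function on $\mathbb R$ with $\hat f>0$ on $(-\infty,0)$, $\hat f=f$ on $[0,1]$, $\hat f<0$ on $(1,+\infty)$. Let $\rho\in C^1(\mathbb R)$ satisfy $\rho=0$ on $(-\infty,0]$, $\rho=1$ on $[1,+\infty)$ and $\rho'>0$ on $(0,1)$. Then for every sufficiently small constant $\varepsilon>0$, the function $\underline u(t,x):=\rho(\varepsilon x-\frac{t}{\varepsilon})-\frac{1-\alpha}{4}$ is a sub-solution and the function $\overline u(t,x):=\rho(\varepsilon x+\frac{t}{\varepsilon}+1)+\frac{\alpha}{4}$ is a super-solution of \[u_t=\mu*u-u+\hat f(u).\]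
   Context: $(\mu*u)(x)=\int_{y\in\mathbb R}u(x-y)\,d\mu(y)$. A sub-solution (resp. super-solution) is a function $u(t,x)$ satisfying $u_t\le\mu*u-u+\hat f(u)$ (resp. $u_t\ge\mu*u-u+\hat f(u)$) for all $t,x\in\mathbb R$. *)

theory Defs
  imports "HOL-Probability.Probability"
begin

definition conv :: "real measure \<Rightarrow> (real \<Rightarrow> real) \<Rightarrow> real \<Rightarrow> real" where
  "conv \<mu> v x = (\<integral>y. v (x - y) \<partial>\<mu>)"

definition subsolution :: "real measure \<Rightarrow> (real \<Rightarrow> real) \<Rightarrow> (real \<Rightarrow> real \<Rightarrow> real) \<Rightarrow> bool" where
  "subsolution \<mu> g u \<longleftrightarrow> (\<forall>t x.
     (\<lambda>s. u s x) differentiable (at t) \<and>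
     integrable \<mu> (\<lambda>y. u t (x - y)) \<and>
     deriv (\<lambda>s. u s x) t \<le> conv \<mu> (u t) x - u t x + g (u t x))"

definition supersolution :: "real measure \<Rightarrow> (real \<Rightarrow> real) \<Rightarrow> (real \<Rightarrow> real \<Rightarrow> real) \<Rightarrow> bool" where
  "supersolution \<mu> g u \<longleftrightarrow> (\<forall>t x.
     (\<lambda>s. u s x) differentiable (at t) \<and>
     integrable \<mu> (\<lambda>y. u t (x - y)) \<and>
     deriv (\<lambda>s. u s x) t \<ge> conv \<mu> (u t) x - u t x + g (u t x))"

end

theory Submission
  imports Defs
begin

text \<open>
  Write \<open>z\<close> for the argument of \<open>\<rho>\<close> in either profile. The time derivative is \<open>\<mp>\<rho>'(z)/\<epsilon>\<close>,
  and \<open>\<mu>*u - u\<close> equals \<open>\<integral> \<rho>(z - \<epsilon>y) d\<mu>(y) - \<rho>(z)\<close>, which tends to \<open>0\<close> uniformly in \<open>z\<close>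
  as \<open>\<epsilon> \<rightarrow> 0\<close>, since \<open>\<rho>\<close> is bounded and Lipschitz and \<open>\<mu>\<close> is tight.
  Where \<open>\<rho>(z)\<close> is close to \<open>0\<close> or \<open>1\<close>, the vertical shift by \<open>(1-\<alpha>)/4\<close> resp. \<open>\<alpha>/4\<close> places
  \<open>u\<close> strictly on the favourable side of a zero of \<open>fh\<close>, so the reaction term has a fixed
  sign and absorbs the small convolution error. Elsewhere \<open>z\<close> ranges over a compact subset of
  \<open>(0,1)\<close>, where \<open>\<rho>'\<close> is bounded below, and \<open>\<rho>'(z)/\<epsilon>\<close> dominates everything for small \<open>\<epsilon>\<close>.
\<close>

lemma integrable_bounded_continuous:
  fixes g :: "real \<Rightarrow> real"
  assumes "finite_measure \<mu>" and "sets \<mu> = sets borel"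
    and "continuous_on UNIV g" and "\<And>y. \<bar>g y\<bar> \<le> C"
  shows "integrable \<mu> g"
proof -
  have "g \<in> borel_measurable \<mu>"
    using borel_measurable_continuous_onI[OF assms(3)]
    by (subst measurable_cong_sets[OF assms(2) refl])
  then show ?thesis
    using assms(4)
    by (intro finite_measure.integrable_const_bound[OF assms(1), where B=C] AE_I2) auto
qed

lemma tendsto_measure_abs_greater:
  assumes "finite_measure \<mu>" and "sets \<mu> = sets borel"
  shows "(\<lambda>n. measure \<mu> {y::real. real n < \<bar>y\<bar>}) \<longlonglongrightarrow> 0"
proof -
  interpret finite_measure \<mu> by (fact assms(1))
  have "{y::real. real n < \<bar>y\<bar>} \<in> sets \<mu>" for n
    unfolding assms(2) by (intro borel_open open_Collect_less continuous_intros)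
  moreover have "decseq (\<lambda>n. {y::real. real n < \<bar>y\<bar>})"
    by (auto simp: decseq_def)
  moreover have "(\<Inter>n. {y::real. real n < \<bar>y\<bar>}) = {}"
    using reals_Archimedean2 by (auto intro: less_asym)
  ultimately show ?thesis
    using finite_Lim_measure_decseq[of "\<lambda>n. {y::real. real n < \<bar>y\<bar>}"] by auto
qed

lemma integral_dilation_error_bound:
  fixes \<rho> :: "real \<Rightarrow> real"
  assumes P: "prob_space \<mu>" and S: "sets \<mu> = sets borel"
    and lip: "B-lipschitz_on UNIV \<rho>" and bnd: "\<And>z. \<bar>\<rho> z\<bar> \<le> M"
    and "0 \<le> \<epsilon>" and "0 \<le> R"
  shows "\<bar>(\<integral>y. \<rho> (z - \<epsilon> * y) \<partial>\<mu>) - \<rho> z\<bar> \<le> 2 * M * measure \<mu> {y. R < \<bar>y\<bar>} + B * R * \<epsilon>"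
proof -
  interpret prob_space \<mu> by (fact P)
  define A where "A = {y::real. R < \<bar>y\<bar>}"
  have A_sets: "A \<in> sets \<mu>"
    unfolding A_def S by (intro borel_open open_Collect_less continuous_intros)
  have integrable: "integrable \<mu> (\<lambda>y. \<rho> (z - \<epsilon> * y))"
  proof (rule integrable_bounded_continuous[OF finite_measure_axioms S, where C=M])
    show "continuous_on UNIV (\<lambda>y. \<rho> (z - \<epsilon> * y))"
      using lipschitz_on_continuous_on[OF lip]
      by (rule continuous_on_compose2) (auto intro: continuous_intros)
  qed (fact bnd)
  have B: "0 \<le> B"
    using lip by (rule lipschitz_on_nonneg)
  have pointwise: "\<bar>\<rho> (z - \<epsilon> * y) - \<rho> z\<bar> \<le> 2 * M * indicator A y + B * R * \<epsilon>" for y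
  proof (cases "y \<in> A")
    case True
    have "0 \<le> B * R * \<epsilon>"
      using B \<open>0 \<le> \<epsilon>\<close> \<open>0 \<le> R\<close> by simp
    then show ?thesis
      using True bnd[of z] bnd[of "z - \<epsilon> * y"] by (simp add: A_def)
  next
    case False
    then have "\<bar>y\<bar> \<le> R" by (simp add: A_def)
    have "\<bar>\<rho> (z - \<epsilon> * y) - \<rho> z\<bar> \<le> B * (\<epsilon> * \<bar>y\<bar>)"
      using lipschitz_onD[OF lip, of "z - \<epsilon> * y" z] \<open>0 \<le> \<epsilon>\<close>
      by (simp add: dist_real_def abs_mult)
    also have "\<dots> \<le> B * R * \<epsilon>"
      using mult_left_mono[OF mult_left_mono[OF \<open>\<bar>y\<bar> \<le> R\<close> \<open>0 \<le> \<epsilon>\<close>] B]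
      by (simp add: mult_ac)
    finally show ?thesis using False by simp
  qed
  have "(\<integral>y. \<rho> (z - \<epsilon> * y) \<partial>\<mu>) - \<rho> z = (\<integral>y. \<rho> (z - \<epsilon> * y) - \<rho> z \<partial>\<mu>)"
    using integrable by (subst Bochner_Integration.integral_diff) (auto simp: prob_space)
  also have "\<bar>\<dots>\<bar> \<le> (\<integral>y. 2 * M * indicator A y + B * R * \<epsilon> \<partial>\<mu>)"
    using A_sets integrable pointwise unfolding real_norm_def[symmetric]
    by (intro Bochner_Integration.integral_norm_bound_integral Bochner_Integration.integrable_add
        Bochner_Integration.integrable_diff integrable_mult_right integrable_real_indicator
        integrable_const)
       (auto simp: less_top[symmetric])
  also have "\<dots> = 2 * M * measure \<mu> A + B * R * \<epsilon>"
    using A_sets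
    by (subst Bochner_Integration.integral_add)
       (auto intro!: integrable_real_indicator simp: prob_space less_top[symmetric])
  finally show ?thesis
    unfolding A_def .
qed

lemma uniform_limit_integral_dilation:
  fixes \<rho> :: "real \<Rightarrow> real"
  assumes P: "prob_space \<mu>" and S: "sets \<mu> = sets borel"
    and lip: "B-lipschitz_on UNIV \<rho>" and bnd: "\<And>z. \<bar>\<rho> z\<bar> \<le> M"
  shows "uniform_limit UNIV (\<lambda>\<epsilon> z. \<integral>y. \<rho> (z - \<epsilon> * y) \<partial>\<mu>) \<rho> (at_right 0)"
proof (rule uniform_limitI)
  fix \<eta> :: real assume "\<eta> > 0"
  have "(\<lambda>n. 2 * M * measure \<mu> {y. real n < \<bar>y\<bar>}) \<longlonglongrightarrow> 0"
    using P S
    by (intro tendsto_mult_right_zero tendsto_measure_abs_greater prob_space.finite_measure)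
  then have "\<forall>\<^sub>F n in sequentially. 2 * M * measure \<mu> {y. real n < \<bar>y\<bar>} < \<eta> / 2"
    using \<open>\<eta> > 0\<close> by (intro order_tendstoD(2)) auto
  then obtain N where N: "2 * M * measure \<mu> {y. real N < \<bar>y\<bar>} < \<eta> / 2"
    by (auto simp: eventually_sequentially)
  have "((\<lambda>\<epsilon>. B * N * \<epsilon>) \<longlongrightarrow> 0) (at_right 0)"
    by (intro tendsto_mult_right_zero tendsto_ident_at)
  then have "\<forall>\<^sub>F \<epsilon> in at_right 0. B * N * \<epsilon> < \<eta> / 2"
    using \<open>\<eta> > 0\<close> by (intro order_tendstoD(2)) auto
  then show "\<forall>\<^sub>F \<epsilon> in at_right 0. \<forall>z\<in>UNIV. dist (\<integral>y. \<rho> (z - \<epsilon> * y) \<partial>\<mu>) (\<rho> z) < \<eta>"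
    using eventually_at_right_less
  proof eventually_elim
    case (elim \<epsilon>)
    show ?case
    proof
      fix z :: real
      have "\<bar>(\<integral>y. \<rho> (z - \<epsilon> * y) \<partial>\<mu>) - \<rho> z\<bar>
          \<le> 2 * M * measure \<mu> {y. real N < \<bar>y\<bar>} + B * N * \<epsilon>"
        using elim by (intro integral_dilation_error_bound[OF P S lip bnd]) auto
      then show "dist (\<integral>y. \<rho> (z - \<epsilon> * y) \<partial>\<mu>) (\<rho> z) < \<eta>"
        using N elim by (simp add: dist_real_def)
    qed
  qed
qed

locale smooth_transition =
  fixes \<rho> \<rho>' :: "real \<Rightarrow> real"
  assumes rho_has_derivative: "\<And>s. (\<rho> has_real_derivative \<rho>' s) (at s)"
    and rho'_continuous: "continuous_on UNIV \<rho>'"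
    and rho_left: "\<And>s. s \<le> 0 \<Longrightarrow> \<rho> s = 0"
    and rho_right: "\<And>s. 1 \<le> s \<Longrightarrow> \<rho> s = 1"
    and rho'_pos: "\<And>s. 0 < s \<Longrightarrow> s < 1 \<Longrightarrow> \<rho>' s > 0"
begin

lemma rho_continuous: "continuous_on A \<rho>"
  using rho_has_derivative by (meson DERIV_isCont continuous_at_imp_continuous_on)

lemma rho'_eq_0: assumes "s \<le> 0 \<or> 1 \<le> s" shows "\<rho>' s = 0"
proof -
  have "\<rho>' w = 0" if "w < 0 \<or> 1 < w" for w
  proof -
    have "((\<lambda>_. \<rho> w) has_real_derivative \<rho>' w) (at w)"
    proof (cases "w < 0")
      case True
      show ?thesis
        by (rule has_field_derivative_transform_within_open[OF rho_has_derivative, of "{..<0}"])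
           (use True rho_left in auto)
    next
      case False
      show ?thesis
        by (rule has_field_derivative_transform_within_open[OF rho_has_derivative, of "{1<..}"])
           (use False that rho_right in auto)
    qed
    then show ?thesis using DERIV_const DERIV_unique by blast
  qed
  then have "{..<0} \<union> {1<..} \<subseteq> {w. \<rho>' w = 0}"
    by auto
  moreover have "closed {w. \<rho>' w = 0}"
    using rho'_continuous by (intro closed_Collect_eq continuous_on_const)
  ultimately have "closure ({..<0} \<union> {1<..}) \<subseteq> {w. \<rho>' w = 0}"
    by (rule closure_minimal)
  then show ?thesis using assms by auto
qed

lemma rho'_nonneg: "0 \<le> \<rho>' s"
  using rho'_eq_0[of s] rho'_pos[of s] by (cases "s \<le> 0 \<or> 1 \<le> s") auto

lemma rho_mono: "a \<le> b \<Longrightarrow> \<rho> a \<le> \<rho> b"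
  by (rule deriv_nonneg_imp_mono[OF rho_has_derivative rho'_nonneg])

lemma rho_bounds: "0 \<le> \<rho> z" "\<rho> z \<le> 1"
  using rho_mono[of "min z 0" z] rho_mono[of z "max z 1"] rho_left rho_right by auto

lemma rho_lipschitz: "\<exists>B. B-lipschitz_on UNIV \<rho>"
proof -
  have "compact (\<rho>' ` {0..1})"
    using rho'_continuous by (intro compact_continuous_image) (auto intro: continuous_on_subset)
  then obtain B where B: "\<forall>y\<in>\<rho>' ` {0..1}. norm y \<le> B"
    using compact_imp_bounded bounded_iff by metis
  have bound: "\<bar>\<rho>' s\<bar> \<le> \<bar>B\<bar>" for s
    using B rho'_eq_0[of s] by (cases "s \<in> {0..1}") (force, auto)
  have "\<bar>B\<bar>-lipschitz_on UNIV \<rho>"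
  proof (intro bounded_derivative_imp_lipschitz[where f' = "\<lambda>s h. \<rho>' s *\<^sub>R h"])
    show "(\<rho> has_derivative (\<lambda>h. \<rho>' s *\<^sub>R h)) (at s within UNIV)" for s
      using rho_has_derivative[of s] by (simp add: has_field_derivative_def mult_commute_abs)
    show "onorm (\<lambda>h::real. \<rho>' s *\<^sub>R h) \<le> \<bar>B\<bar>" for s
      unfolding onorm_scaleR[OF bounded_linear_ident] onorm_id using bound by simp
  qed auto
  then show ?thesis ..
qed

lemma uniform_limit_rho_dilation:
  assumes "prob_space \<mu>" and "sets \<mu> = sets borel"
  shows "uniform_limit UNIV (\<lambda>\<epsilon> z. \<integral>y. \<rho> (z - \<epsilon> * y) \<partial>\<mu>) \<rho> (at_right 0)"
proof -
  obtain B where "B-lipschitz_on UNIV \<rho>" using rho_lipschitz ..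
  then show ?thesis
    using rho_bounds by (intro uniform_limit_integral_dilation[OF assms, where M=1]) auto
qed

lemma rho'_lower_bound:
  assumes "0 < d"
  shows "\<exists>m>0. \<forall>z. d \<le> \<rho> z \<and> \<rho> z \<le> 1 - d \<longrightarrow> m \<le> \<rho>' z"
proof -
  define K where "K = {z. d \<le> \<rho> z \<and> \<rho> z \<le> 1 - d}"
  have K_inside: "K \<subseteq> {0<..<1}"
  proof
    fix z assume "z \<in> K"
    then have "\<not> z \<le> 0" "\<not> 1 \<le> z"
      using assms rho_left[of z] rho_right[of z] by (auto simp: K_def)
    then show "z \<in> {0<..<1}" by simp
  qed
  have "compact K"
    unfolding compact_eq_bounded_closed
  proof
    show "bounded K"
      using bounded_Ioo K_inside by (rule bounded_subset)
    show "closed K"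
      unfolding K_def using rho_continuous
      by (intro closed_Collect_conj closed_Collect_le continuous_on_const)
  qed
  show ?thesis
  proof (cases "K = {}")
    case True
    then show ?thesis by (auto simp: K_def intro!: exI[of _ 1])
  next
    case False
    then obtain a where "a \<in> K" and "\<forall>z\<in>K. \<rho>' a \<le> \<rho>' z"
      using continuous_attains_inf[OF \<open>compact K\<close>] rho'_continuous continuous_on_subset by blast
    then show ?thesis
      using K_inside rho'_pos by (auto simp: K_def intro!: exI[of _ "\<rho>' a"])
  qed
qed

lemma eventually_rho'_div_ge:
  assumes "0 < d"
  shows "\<forall>\<^sub>F \<epsilon> in at_right 0. \<forall>z. d \<le> \<rho> z \<and> \<rho> z \<le> 1 - d \<longrightarrow> C \<le> \<rho>' z / \<epsilon>"
proof -
  obtain m where "m > 0" and m: "\<And>z. d \<le> \<rho> z \<Longrightarrow> \<rho> z \<le> 1 - d \<Longrightarrow> m \<le> \<rho>' z"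
    using rho'_lower_bound[OF assms] by blast
  have "\<forall>\<^sub>F \<epsilon> in at_right 0. \<epsilon> < m / (\<bar>C\<bar> + 1)"
    using \<open>m > 0\<close> by (intro order_tendstoD(2)[OF tendsto_ident_at]) simp
  with eventually_at_right_less show ?thesis
  proof eventually_elim
    case (elim \<epsilon>)
    show ?case
    proof (intro allI impI)
      fix z assume "d \<le> \<rho> z \<and> \<rho> z \<le> 1 - d"
      have "\<bar>C\<bar> + 1 < m / \<epsilon>"
        using elim by (simp add: field_simps)
      also have "\<dots> \<le> \<rho>' z / \<epsilon>"
        using m \<open>d \<le> \<rho> z \<and> \<rho> z \<le> 1 - d\<close> elim by (simp add: divide_right_mono)
      finally show "C \<le> \<rho>' z / \<epsilon>" by simp
    qed
  qed
qed

lemma eventually_rho'_dominates: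
  assumes \<phi>: "continuous_on {0..1} \<phi>" and d: "0 < d" "d \<le> 1"
    and ends: "\<And>v. v \<in> {0..d} \<union> {1-d..1} \<Longrightarrow> 0 < \<phi> v"
  shows "\<exists>\<eta>>0. \<forall>\<^sub>F \<epsilon> in at_right 0. \<forall>z e. \<bar>e\<bar> \<le> \<eta> \<longrightarrow> 0 \<le> \<rho>' z / \<epsilon> + e + \<phi> (\<rho> z)"
proof -
  let ?E = "{0..d} \<union> {1-d..1}"
  have "compact ?E" "?E \<noteq> {}" "continuous_on ?E \<phi>"
    using d by (auto intro!: compact_Un continuous_on_subset[OF \<phi>])
  then obtain a where "a \<in> ?E" and a_min: "\<forall>v\<in>?E. \<phi> a \<le> \<phi> v"
    using continuous_attains_inf by blast
  then have "0 < \<phi> a" using ends by blast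
  obtain M where M: "\<forall>y\<in>\<phi> ` {0..1}. norm y \<le> M"
    using compact_continuous_image[OF \<phi>] compact_imp_bounded bounded_iff by (metis compact_Icc)
  define \<eta> where "\<eta> = \<phi> a / 2"
  have "\<forall>\<^sub>F \<epsilon> in at_right 0. \<forall>z e. \<bar>e\<bar> \<le> \<eta> \<longrightarrow> 0 \<le> \<rho>' z / \<epsilon> + e + \<phi> (\<rho> z)"
    using eventually_rho'_div_ge[OF d(1), of "\<eta> + M"] eventually_at_right_less
  proof eventually_elim
    case (elim \<epsilon>)
    show ?case
    proof (intro allI impI)
      fix z e :: real assume "\<bar>e\<bar> \<le> \<eta>"
      consider "\<rho> z \<in> ?E" | "d \<le> \<rho> z \<and> \<rho> z \<le> 1 - d"
        using rho_bounds[of z] by force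
      then show "0 \<le> \<rho>' z / \<epsilon> + e + \<phi> (\<rho> z)"
      proof cases
        case 1
        then have "\<phi> a \<le> \<phi> (\<rho> z)" using a_min by blast
        moreover have "0 \<le> \<rho>' z / \<epsilon>" using rho'_nonneg elim by simp
        ultimately show ?thesis using \<open>\<bar>e\<bar> \<le> \<eta>\<close> \<eta>_def by linarith
      next
        case 2
        then have "\<eta> + M \<le> \<rho>' z / \<epsilon>" using elim by blast
        moreover have "\<bar>\<phi> (\<rho> z)\<bar> \<le> M"
          using M rho_bounds[of z] by auto
        ultimately show ?thesis
          using \<open>\<bar>e\<bar> \<le> \<eta>\<close> by linarith
      qed
    qed
  qed
  moreover have "\<eta> > 0"
    using \<open>0 < \<phi> a\<close> by (simp add: \<eta>_def)
  ultimately show ?thesis by blast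
qed

lemma integrable_rho_dilation:
  assumes "prob_space \<mu>" and "sets \<mu> = sets borel"
  shows "integrable \<mu> (\<lambda>y. \<rho> (z - \<epsilon> * y))"
proof (rule integrable_bounded_continuous[where C=1])
  show "finite_measure \<mu>"
    using assms(1) by (rule prob_space.finite_measure)
  show "sets \<mu> = sets borel"
    by (fact assms(2))
  show "continuous_on UNIV (\<lambda>y. \<rho> (z - \<epsilon> * y))"
    using rho_continuous by (rule continuous_on_compose2) (auto intro: continuous_intros)
qed (use rho_bounds in auto)

lemma profile_subsolutionI:
  assumes P: "prob_space \<mu>" and S: "sets \<mu> = sets borel" and "0 < \<epsilon>"
    and ineq: "\<And>z. 0 \<le> \<rho>' z / \<epsilon> + ((\<integral>y. \<rho> (z - \<epsilon> * y) \<partial>\<mu>) - \<rho> z) + g (\<rho> z - k)"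
  shows "subsolution \<mu> g (\<lambda>t x. \<rho> (\<epsilon> * x - t / \<epsilon> + h) - k)"
  unfolding subsolution_def
proof (intro allI conjI)
  interpret prob_space \<mu> by (fact P)
  fix t x
  define z where "z = \<epsilon> * x - t / \<epsilon> + h"
  have D: "((\<lambda>s. \<rho> (\<epsilon> * x - s / \<epsilon> + h) - k) has_real_derivative - (\<rho>' z / \<epsilon>)) (at t)"
    unfolding z_def using \<open>0 < \<epsilon>\<close>
    by (auto intro!: derivative_eq_intros DERIV_chain2[OF rho_has_derivative])
  have shift: "(\<lambda>y. \<rho> (\<epsilon> * (x - y) - t / \<epsilon> + h) - k) = (\<lambda>y. \<rho> (z - \<epsilon> * y) - k)"
    by (simp add: z_def algebra_simps)
  have int: "integrable \<mu> (\<lambda>y. \<rho> (z - \<epsilon> * y))"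
    by (rule integrable_rho_dilation[OF P S])
  show "(\<lambda>s. \<rho> (\<epsilon> * x - s / \<epsilon> + h) - k) differentiable (at t)"
    using D by (auto simp: has_field_derivative_def intro: differentiableI)
  show "integrable \<mu> (\<lambda>y. \<rho> (\<epsilon> * (x - y) - t / \<epsilon> + h) - k)"
    unfolding shift using int by simp
  show "deriv (\<lambda>s. \<rho> (\<epsilon> * x - s / \<epsilon> + h) - k) t
      \<le> conv \<mu> (\<lambda>x. \<rho> (\<epsilon> * x - t / \<epsilon> + h) - k) x
         - (\<rho> (\<epsilon> * x - t / \<epsilon> + h) - k) + g (\<rho> (\<epsilon> * x - t / \<epsilon> + h) - k)"
    unfolding DERIV_imp_deriv[OF D] conv_def shift z_def[symmetric]
    using ineq[of z] int by (simp add: prob_space)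
qed

lemma profile_supersolutionI:
  assumes P: "prob_space \<mu>" and S: "sets \<mu> = sets borel" and "0 < \<epsilon>"
    and ineq: "\<And>z. 0 \<le> \<rho>' z / \<epsilon> - ((\<integral>y. \<rho> (z - \<epsilon> * y) \<partial>\<mu>) - \<rho> z) - g (\<rho> z + k)"
  shows "supersolution \<mu> g (\<lambda>t x. \<rho> (\<epsilon> * x + t / \<epsilon> + h) + k)"
  unfolding supersolution_def
proof (intro allI conjI)
  interpret prob_space \<mu> by (fact P)
  fix t x
  define z where "z = \<epsilon> * x + t / \<epsilon> + h"
  have D: "((\<lambda>s. \<rho> (\<epsilon> * x + s / \<epsilon> + h) + k) has_real_derivative \<rho>' z / \<epsilon>) (at t)"
    unfolding z_def using \<open>0 < \<epsilon>\<close>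
    by (auto intro!: derivative_eq_intros DERIV_chain2[OF rho_has_derivative])
  have shift: "(\<lambda>y. \<rho> (\<epsilon> * (x - y) + t / \<epsilon> + h) + k) = (\<lambda>y. \<rho> (z - \<epsilon> * y) + k)"
    by (simp add: z_def algebra_simps)
  have int: "integrable \<mu> (\<lambda>y. \<rho> (z - \<epsilon> * y))"
    by (rule integrable_rho_dilation[OF P S])
  show "(\<lambda>s. \<rho> (\<epsilon> * x + s / \<epsilon> + h) + k) differentiable (at t)"
    using D by (auto simp: has_field_derivative_def intro: differentiableI)
  show "integrable \<mu> (\<lambda>y. \<rho> (\<epsilon> * (x - y) + t / \<epsilon> + h) + k)"
    unfolding shift using int by simp
  show "conv \<mu> (\<lambda>x. \<rho> (\<epsilon> * x + t / \<epsilon> + h) + k) x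
         - (\<rho> (\<epsilon> * x + t / \<epsilon> + h) + k) + g (\<rho> (\<epsilon> * x + t / \<epsilon> + h) + k)
      \<le> deriv (\<lambda>s. \<rho> (\<epsilon> * x + s / \<epsilon> + h) + k) t"
    unfolding DERIV_imp_deriv[OF D] conv_def shift z_def[symmetric]
    using ineq[of z] int by (simp add: prob_space)
qed

lemma eventually_profile_subsolution:
  assumes P: "prob_space \<mu>" and S: "sets \<mu> = sets borel"
    and "continuous_on {0..1} (\<lambda>v. g (v - k))" and "0 < d" "d \<le> 1"
    and "\<And>v. v \<in> {0..d} \<union> {1-d..1} \<Longrightarrow> 0 < g (v - k)"
  shows "\<forall>\<^sub>F \<epsilon> in at_right 0. subsolution \<mu> g (\<lambda>t x. \<rho> (\<epsilon> * x - t / \<epsilon> + h) - k)"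
proof -
  obtain \<eta> where "\<eta> > 0" and dominated:
    "\<forall>\<^sub>F \<epsilon> in at_right 0. \<forall>z e. \<bar>e\<bar> \<le> \<eta> \<longrightarrow> 0 \<le> \<rho>' z / \<epsilon> + e + g (\<rho> z - k)"
    using eventually_rho'_dominates[of "\<lambda>v. g (v - k)" d] assms(3-) by blast
  have "\<forall>\<^sub>F \<epsilon> in at_right 0. \<forall>z. dist (\<integral>y. \<rho> (z - \<epsilon> * y) \<partial>\<mu>) (\<rho> z) < \<eta>"
    using uniform_limitD[OF uniform_limit_rho_dilation[OF P S] \<open>\<eta> > 0\<close>] by simp
  with dominated eventually_at_right_less show ?thesis
  proof eventually_elim
    case (elim \<epsilon>)
    then show ?case
      by (intro profile_subsolutionI[OF P S]) (auto simp: dist_real_def less_imp_le)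
  qed
qed

lemma eventually_profile_supersolution:
  assumes P: "prob_space \<mu>" and S: "sets \<mu> = sets borel"
    and "continuous_on {0..1} (\<lambda>v. g (v + k))" and "0 < d" "d \<le> 1"
    and "\<And>v. v \<in> {0..d} \<union> {1-d..1} \<Longrightarrow> g (v + k) < 0"
  shows "\<forall>\<^sub>F \<epsilon> in at_right 0. supersolution \<mu> g (\<lambda>t x. \<rho> (\<epsilon> * x + t / \<epsilon> + h) + k)"
proof -
  have "continuous_on {0..1} (\<lambda>v. - g (v + k))"
    using assms(3) by (rule continuous_on_minus)
  then obtain \<eta> where "\<eta> > 0" and dominated:
    "\<forall>\<^sub>F \<epsilon> in at_right 0. \<forall>z e. \<bar>e\<bar> \<le> \<eta> \<longrightarrow> 0 \<le> \<rho>' z / \<epsilon> + e + - g (\<rho> z + k)"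
    using eventually_rho'_dominates[of "\<lambda>v. - g (v + k)" d] assms(4-) by fastforce
  have "\<forall>\<^sub>F \<epsilon> in at_right 0. \<forall>z. dist (\<integral>y. \<rho> (z - \<epsilon> * y) \<partial>\<mu>) (\<rho> z) < \<eta>"
    using uniform_limitD[OF uniform_limit_rho_dilation[OF P S] \<open>\<eta> > 0\<close>] by simp
  with dominated eventually_at_right_less show ?thesis
  proof eventually_elim
    case (elim \<epsilon>)
    show ?case
    proof (rule profile_supersolutionI[OF P S \<open>0 < \<epsilon>\<close>])
      fix z
      have "\<bar>- ((\<integral>y. \<rho> (z - \<epsilon> * y) \<partial>\<mu>) - \<rho> z)\<bar> \<le> \<eta>"
        using elim(3)[rule_format, of z] by (simp add: dist_real_def abs_minus_commute)
      from elim(1)[rule_format, where z = z, OF this]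
      show "0 \<le> \<rho>' z / \<epsilon> - ((\<integral>y. \<rho> (z - \<epsilon> * y) \<partial>\<mu>) - \<rho> z) - g (\<rho> z + k)"
        by simp
    qed
  qed
qed

end

lemma pos_near_ends_shifted_down:
  fixes g :: "real \<Rightarrow> real"
  assumes "0 < \<alpha>" "\<alpha> < 1"
    and below: "\<And>s. s < 0 \<Longrightarrow> 0 < g s" and above_\<alpha>: "\<And>s. \<alpha> < s \<Longrightarrow> s < 1 \<Longrightarrow> 0 < g s"
    and "v \<in> {0..(1 - \<alpha>) / 8} \<union> {1 - (1 - \<alpha>) / 8..1}"
  shows "0 < g (v - (1 - \<alpha>) / 4)"
proof (cases "v \<le> (1 - \<alpha>) / 8")
  case True
  then show ?thesis using \<open>\<alpha> < 1\<close> by (intro below) (simp add: field_simps)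
next
  case False
  then show ?thesis using assms by (intro above_\<alpha>) (auto simp: field_simps)
qed

lemma neg_near_ends_shifted_up:
  fixes g :: "real \<Rightarrow> real"
  assumes "0 < \<alpha>" "\<alpha> < 1"
    and below_\<alpha>: "\<And>s. 0 < s \<Longrightarrow> s < \<alpha> \<Longrightarrow> g s < 0" and above: "\<And>s. 1 < s \<Longrightarrow> g s < 0"
    and "v \<in> {0..\<alpha> / 8} \<union> {1 - \<alpha> / 8..1}"
  shows "g (v + \<alpha> / 4) < 0"
proof (cases "v \<le> \<alpha> / 8")
  case True
  then show ?thesis using assms by (intro below_\<alpha>) auto
next
  case False
  then show ?thesis using assms by (intro above) auto
qed

theorem lemma12:
  fixes \<mu> :: "real measure" and f fh \<rho> \<rho>' :: "real \<Rightarrow> real" and \<alpha> :: real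
  assumes mu_borel: "sets \<mu> = sets borel"
    and mu_prob: "emeasure \<mu> (space \<mu>) = 1"
    and alpha: "0 < \<alpha>" "\<alpha> < 1"
    and f_lip: "\<exists>L. L-lipschitz_on {0..1} f"
    and f_zeros: "f 0 = 0" "f \<alpha> = 0" "f 1 = 0"
    and f_neg: "\<And>s. 0 < s \<Longrightarrow> s < \<alpha> \<Longrightarrow> f s < 0"
    and f_pos: "\<And>s. \<alpha> < s \<Longrightarrow> s < 1 \<Longrightarrow> f s > 0"
    and fh_lip: "\<exists>L. L-lipschitz_on UNIV fh"
    and fh_neg_side: "\<And>s. s < 0 \<Longrightarrow> fh s > 0"
    and fh_eq: "\<And>s. 0 \<le> s \<Longrightarrow> s \<le> 1 \<Longrightarrow> fh s = f s"
    and fh_pos_side: "\<And>s. 1 < s \<Longrightarrow> fh s < 0"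
    and rho_deriv: "\<And>s. (\<rho> has_real_derivative \<rho>' s) (at s)"
    and rho'_cont: "continuous_on UNIV \<rho>'"
    and rho_left: "\<And>s. s \<le> 0 \<Longrightarrow> \<rho> s = 0"
    and rho_right: "\<And>s. 1 \<le> s \<Longrightarrow> \<rho> s = 1"
    and rho'_pos: "\<And>s. 0 < s \<Longrightarrow> s < 1 \<Longrightarrow> \<rho>' s > 0"
  shows "\<exists>\<epsilon>0>0. \<forall>\<epsilon>. 0 < \<epsilon> \<and> \<epsilon> < \<epsilon>0 \<longrightarrow>
           subsolution \<mu> fh (\<lambda>t x. \<rho> (\<epsilon> * x - t / \<epsilon>) - (1 - \<alpha>) / 4) \<and>
           supersolution \<mu> fh (\<lambda>t x. \<rho> (\<epsilon> * x + t / \<epsilon> + 1) + \<alpha> / 4)"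
proof -
  interpret smooth_transition \<rho> \<rho>'
    by unfold_locales (fact rho_deriv rho'_cont rho_left rho_right rho'_pos)+
  have P: "prob_space \<mu>"
    using mu_prob by (rule prob_spaceI)
  obtain L where "L-lipschitz_on UNIV fh"
    using fh_lip by blast
  then have fh_cont: "continuous_on UNIV fh"
    by (rule lipschitz_on_continuous_on)
  have fh_pos: "0 < fh s" if "\<alpha> < s" "s < 1" for s
    using that alpha fh_eq[of s] f_pos[of s] by simp
  have fh_neg: "fh s < 0" if "0 < s" "s < \<alpha>" for s
    using that alpha fh_eq[of s] f_neg[of s] by simp
  have "\<forall>\<^sub>F \<epsilon> in at_right 0. subsolution \<mu> fh (\<lambda>t x. \<rho> (\<epsilon> * x - t / \<epsilon> + 0) - (1 - \<alpha>) / 4)"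
    using alpha fh_cont
    by (intro eventually_profile_subsolution[OF P mu_borel, where d = "(1 - \<alpha>) / 8"]
        pos_near_ends_shifted_down[OF alpha fh_neg_side fh_pos] continuous_on_compose2[OF fh_cont])
       (auto intro: continuous_intros)
  moreover have "\<forall>\<^sub>F \<epsilon> in at_right 0. supersolution \<mu> fh (\<lambda>t x. \<rho> (\<epsilon> * x + t / \<epsilon> + 1) + \<alpha> / 4)"
    using alpha fh_cont
    by (intro eventually_profile_supersolution[OF P mu_borel, where d = "\<alpha> / 8"]
        neg_near_ends_shifted_up[OF alpha fh_neg fh_pos_side] continuous_on_compose2[OF fh_cont])
       (auto intro: continuous_intros)
  ultimately have "\<forall>\<^sub>F \<epsilon> in at_right 0.
      subsolution \<mu> fh (\<lambda>t x. \<rho> (\<epsilon> * x - t / \<epsilon>) - (1 - \<alpha>) / 4) \<and>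
      supersolution \<mu> fh (\<lambda>t x. \<rho> (\<epsilon> * x + t / \<epsilon> + 1) + \<alpha> / 4)"
    by eventually_elim simp
  then show ?thesis
    by (force simp: eventually_at_right_field)
qed

end
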